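(* Consider the NSGA-II with population size $N\ge 4(n+1)$ optimizing \textsc{LeadingOnesTrailingZeroes} (with any way of generating offspring). If in some iteration $t$ the combined population $R_t=P_t\cup Q_t$ contains an individual $x$ of rank one (in the non-dominated sorting of $R_t$), then $P_{t+1}$ contains an individual $y$ with $f(y)=f(x)$. In particular, if $P_t$ contains an individual with objective value $(k,n-k)$ for some $k\in\{0,\dots,n\}$, then so does $P_s$ for every $s\ge t$.
   Context: Search space $\{0,1\}^n$; objective $f=(f_1,f_2):\{0,1\}^n\to\mathbb{R}^2$, both objectives maximized. $x$ strictly dominates $y$ if $f_1(x)\ge f_1(y)$, $f_2(x)\ge f_2(y)$ and at least one inequality is strict. Populations are multisets of bit strings; for a population $P$, $f(P)=\{f(x):x\in P\}$. Non-dominated sorting of a population $S$: $F_1$ is the set of individuals of $S$ not strictly dominated by any individual of $S$; inductively, $F_{k+1}$ is the set of individuals of $S\setminus(F_1\cup\dots\cup F_k)$ not strictly dominated by any individual of $S\setminus(F_1\cup\dots\cup F_k)$; the rank of $x$ in $S$ is the $k$ with $x\in F_k$. Crowding distance of the individuals of a set $S$ (computed with respect to $S$): start with $\mathrm{cDis}(x)=0$ for all $x\in S$; for each $i\in\{1,2\}$, sort $S$ in ascending $f_i$-value as $S_{i.1},\dots,S_{i.|S|}$ (ties broken arbitrarily), set $\mathrm{cDis}(S_{i.1})=\mathrm{cDis}(S_{i.|S|})=+\infty$, and for $2\le j\le |S|-1$ add $\frac{f_i(S_{i.j+1})-f_i(S_{i.j-1})}{f_i(S_{i.|S|})-f_i(S_{i.1})}$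 to $\mathrm{cDis}(S_{i.j})$ (if $f_i$ is constant on $S$, these summands are taken to be $0$). The NSGA-II with population size $N$: $P_0$ consists of $N$ independent uniformly random bit strings; in iteration $t=0,1,2,\dots$ it generates an offspring population $Q_t$ of $N$ individuals, sets $R_t=P_t\cup Q_t$ (multiset union, $2N$ individuals), computes the fronts $F_1,F_2,\dots$ of $R_t$, lets $i^*$ be minimal with $\sum_{i\le i^*}|F_i|\ge N$, computes the crowding distance of each individual of $F_i$ ($i\le i^*$) with respect to $F_i$, and sets $P_{t+1}=F_1\cup\dots\cup F_{i^*-1}\cup\tilde F_{i^*}$, where $\tilde F_{i^*}$ consists of the $N-\sum_{i<i^*}|F_i|$ individuals of $F_{i^*}$ with largest crowding distance, ties broken uniformly at random. \textsc{LeadingOnesTrailingZeroes}: $f(x)=\left(\sum_{i=1}^n\prod_{j=1}^i x_j,\ \sum_{i=1}^n\prod_{j=i}^n(1-x_j)\right)$ (number of leading ones, number of trailing zeros). Its Pareto front is $\{(k,n-k):k\in\{0,\dots,n\}\}$. *)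

theory Defs
  imports Complex_Main "HOL-Library.Multiset" "HOL-Library.Extended_Real"
begin

text \<open>Bit strings are boolean lists; position j (1-based) is x ! (j-1).\<close>

definition LO :: "bool list \<Rightarrow> nat" where
  "LO x = (\<Sum>i=1..length x. \<Prod>j=1..i. of_bool (x ! (j - 1)))"

definition TZ :: "bool list \<Rightarrow> nat" where
  "TZ x = (\<Sum>i=1..length x. \<Prod>j=i..length x. of_bool (\<not> x ! (j - 1)))"

definition lotz :: "bool list \<Rightarrow> real \<times> real" where
  "lotz x = (real (LO x), real (TZ x))"

definition sdom :: "('a \<Rightarrow> real \<times> real) \<Rightarrow> 'a \<Rightarrow> 'a \<Rightarrow> bool" where
  "sdom f x y \<longleftrightarrow> fst (f x) \<ge> fst (f y) \<and> snd (f x) \<ge> snd (f y) \<and>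
                   (fst (f x) > fst (f y) \<or> snd (f x) > snd (f y))"

text \<open>A population is a list; individuals are identified by their index, so
  that multiple copies of the same bit string are distinct individuals.\<close>

definition nondom :: "('a \<Rightarrow> real \<times> real) \<Rightarrow> 'a list \<Rightarrow> nat set \<Rightarrow> nat set" where
  "nondom f R S = {i \<in> S. \<forall>j\<in>S. \<not> sdom f (R ! j) (R ! i)}"

fun remaining :: "('a \<Rightarrow> real \<times> real) \<Rightarrow> 'a list \<Rightarrow> nat \<Rightarrow> nat set" where
  "remaining f R 0 = {..<length R}"
| "remaining f R (Suc k) = remaining f R k - nondom f R (remaining f R k)"

text \<open>front f R k is the k-th front F_k (k \<ge> 1) of R (a set of indices).\<close>
definition front :: "('a \<Rightarrow> real \<times> real) \<Rightarrow> 'a list \<Rightarrow> nat \<Rightarrow> nat set" where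
  "front f R k = nondom f R (remaining f R (k - 1))"

definition sorted_enum :: "(nat \<Rightarrow> real) \<Rightarrow> nat set \<Rightarrow> nat list \<Rightarrow> bool" where
  "sorted_enum g S s \<longleftrightarrow> distinct s \<and> set s = S \<and> sorted_wrt (\<lambda>a b. g a \<le> g b) s"

definition cterm :: "(nat \<Rightarrow> real) \<Rightarrow> nat list \<Rightarrow> nat \<Rightarrow> ereal" where
  "cterm g s j =
     (if j = 0 \<or> j = length s - 1 then \<infinity>
      else if g (s ! (length s - 1)) = g (s ! 0) then 0
      else ereal ((g (s ! (j + 1)) - g (s ! (j - 1))) / (g (s ! (length s - 1)) - g (s ! 0))))"

definition cdis :: "(nat \<Rightarrow> real) \<Rightarrow> (nat \<Rightarrow> real) \<Rightarrow> nat list \<Rightarrow> nat list \<Rightarrow> nat \<Rightarrow> ereal" where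
  "cdis g1 g2 s1 s2 i =
     (\<Sum>j<length s1. if s1 ! j = i then cterm g1 s1 j else 0) +
     (\<Sum>j<length s2. if s2 ! j = i then cterm g2 s2 j else 0)"

text \<open>nsga_select f N R P': P' is a possible outcome (for some tie-breaking) of
  selecting the next population of size N from the combined population R.\<close>
definition nsga_select :: "('a \<Rightarrow> real \<times> real) \<Rightarrow> nat \<Rightarrow> 'a list \<Rightarrow> 'a list \<Rightarrow> bool" where
  "nsga_select f N R P' \<longleftrightarrow>
     (\<exists>istar T s1 s2.
        istar \<ge> 1 \<and>
        (\<Sum>i=1..istar. card (front f R i)) \<ge> N \<and>
        (\<forall>k. 1 \<le> k \<and> k < istar \<longrightarrow> (\<Sum>i=1..k. card (front f R i)) < N) \<and>
        sorted_enum (\<lambda>i. fst (f (R ! i))) (front f R istar) s1 \<and>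
        sorted_enum (\<lambda>i. snd (f (R ! i))) (front f R istar) s2 \<and>
        T \<subseteq> front f R istar \<and>
        card T = N - (\<Sum>i\<in>{1..<istar}. card (front f R i)) \<and>
        (\<forall>a\<in>T. \<forall>b\<in>front f R istar - T.
           cdis (\<lambda>i. fst (f (R ! i))) (\<lambda>i. snd (f (R ! i))) s1 s2 a \<ge>
           cdis (\<lambda>i. fst (f (R ! i))) (\<lambda>i. snd (f (R ! i))) s1 s2 b) \<and>
        mset P' = image_mset (\<lambda>i. R ! i)
                    (mset_set ((\<Union>i\<in>{1..<istar}. front f R i) \<union> T)))"

end

theory Submission
  imports Defs
begin

text \<open>If the first front does not fill the population, it survives entirely. Otherwise the
  next population consists of the \<open>N\<close> individuals of \<open>F\<^sub>1\<close> with largest crowding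
  distance. In an objective-sorted order only the first and last position of a run of equal
  values can receive a positive contribution, so with \<open>n + 1\<close> possible values per objective
  at most \<open>4(n + 1) \<le> N\<close> individuals have positive crowding distance. The first individual
  of the run containing a given \<open>x \<in> F\<^sub>1\<close> in the \<open>f\<^sub>1\<close>-order has positive distance, so it
  is selected: otherwise it and all \<open>N\<close> selected individuals would have positive distance.
  Being non-dominated with \<open>x\<close> and having the same \<open>f\<^sub>1\<close>-value, it has the same objective
  vector. Pareto-optimal individuals always lie in \<open>F\<^sub>1\<close>, which gives the second claim by
  induction.\<close>

lemma sorted_enum_mono:
  "sorted_enum g S s \<Longrightarrow> j \<le> k \<Longrightarrow> k < length s \<Longrightarrow> g (s ! j) \<le> g (s ! k)"
  unfolding sorted_enum_def by (cases "j = k") (auto simp: sorted_wrt_iff_nth_less)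

definition run_boundaries :: "(nat \<Rightarrow> real) \<Rightarrow> nat list \<Rightarrow> nat set" where
  "run_boundaries g s = {j. j < length s \<and> (j = 0 \<or> j = length s - 1 \<or>
     g (s ! (j - 1)) < g (s ! j) \<or> g (s ! j) < g (s ! (j + 1)))}"

lemma cterm_nonneg:
  assumes "sorted_enum g S s" "j < length s"
  shows "cterm g s j \<ge> 0"
  using sorted_enum_mono[OF assms(1), of "j - 1" "j + 1"]
    sorted_enum_mono[OF assms(1), of 0 "length s - 1"] assms(2)
  unfolding cterm_def by auto

lemma cterm_pos_imp_run_boundary:
  assumes "sorted_enum g S s" "j < length s" "cterm g s j > 0"
  shows "j \<in> run_boundaries g s"
proof (rule ccontr)
  assume "j \<notin> run_boundaries g s"
  then have "j \<noteq> 0" "j \<noteq> length s - 1" "g (s ! (j + 1)) = g (s ! (j - 1))"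
    using sorted_enum_mono[OF assms(1), of "j - 1" j] sorted_enum_mono[OF assms(1), of j "j + 1"]
      assms(2) by (auto simp: run_boundaries_def)
  then have "cterm g s j = 0" by (simp add: cterm_def)
  with assms(3) show False by simp
qed

lemma cterm_pos_at_run_start:
  assumes "sorted_enum g S s" "j < length s" "j = 0 \<or> g (s ! (j - 1)) < g (s ! j)"
  shows "cterm g s j > 0"
proof (cases "j = 0 \<or> j = length s - 1")
  case False
  with assms have "g (s ! (j - 1)) < g (s ! j)" by auto
  moreover have "g (s ! j) \<le> g (s ! (j + 1))" "g (s ! 0) \<le> g (s ! (j - 1))"
    "g (s ! j) \<le> g (s ! (length s - 1))"
    using sorted_enum_mono[OF assms(1)] False assms(2) by auto
  ultimately show ?thesis using False by (simp add: cterm_def)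
qed (auto simp: cterm_def)

lemma card_run_boundaries_le:
  assumes s: "sorted_enum g S s" and values_in: "g ` S \<subseteq> V" "finite V"
  shows "card (run_boundaries g s) \<le> 2 * card V"
proof -
  let ?val = "\<lambda>j. g (s ! j)"
  let ?starts = "{j. j < length s \<and> (j = 0 \<or> g (s ! (j - 1)) < g (s ! j))}"
  let ?ends = "{j. j < length s \<and> (j = length s - 1 \<or> g (s ! j) < g (s ! (j + 1)))}"
  have img: "?val ` {..<length s} \<subseteq> V"
    using s values_in(1) by (auto simp: sorted_enum_def)
  have start_less: "?val a < ?val b" if "a < b" "b \<in> ?starts" for a b
  proof -
    from that have "g (s ! a) \<le> g (s ! (b - 1))" "g (s ! (b - 1)) < g (s ! b)"
      using sorted_enum_mono[OF s, of a "b - 1"] by auto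
    then show ?thesis by linarith
  qed
  have "inj_on ?val ?starts"
  proof (rule inj_onI)
    fix a b assume "a \<in> ?starts" "b \<in> ?starts" "?val a = ?val b"
    then show "a = b"
      using start_less[of a b] start_less[of b a] by (cases a b rule: linorder_cases) auto
  qed
  then have starts: "card ?starts \<le> card V"
    by (rule card_inj_on_le) (use img values_in(2) in auto)
  have end_less: "?val a < ?val b" if "a < b" "a \<in> ?ends" "b < length s" for a b
  proof -
    from that have "g (s ! a) < g (s ! (a + 1))" "g (s ! (a + 1)) \<le> g (s ! b)"
      using sorted_enum_mono[OF s, of "a + 1" b] by auto
    then show ?thesis by linarith
  qed
  have "inj_on ?val ?ends"
  proof (rule inj_onI)
    fix a b assume "a \<in> ?ends" "b \<in> ?ends" "?val a = ?val b"
    then show "a = b"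
      using end_less[of a b] end_less[of b a] by (cases a b rule: linorder_cases) auto
  qed
  then have ends: "card ?ends \<le> card V"
    by (rule card_inj_on_le) (use img values_in(2) in auto)
  have "run_boundaries g s = ?starts \<union> ?ends"
    by (auto simp: run_boundaries_def)
  then have "card (run_boundaries g s) \<le> card ?starts + card ?ends"
    by (simp add: card_Un_le)
  with starts ends show ?thesis by linarith
qed

lemma sum_nth_eq_distinct:
  assumes "distinct s" "k < length s"
  shows "(\<Sum>j<length s. if s ! j = s ! k then c j else (0::ereal)) = c k"
proof -
  have "(\<Sum>j<length s. if s ! j = s ! k then c j else (0::ereal)) =
        (\<Sum>j<length s. if j = k then c j else 0)"
    using assms by (intro sum.cong) (auto simp: nth_eq_iff_index_eq)
  then show ?thesis using assms(2) by simp
qed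

lemma cdis_nth:
  assumes "sorted_enum g1 S s1" "sorted_enum g2 S s2" "j < length s1"
  obtains k where "k < length s2" "s2 ! k = s1 ! j"
    "cdis g1 g2 s1 s2 (s1 ! j) = cterm g1 s1 j + cterm g2 s2 k"
proof -
  have distinct: "distinct s1" "distinct s2" and "set s1 = set s2"
    using assms(1,2) by (simp_all add: sorted_enum_def)
  then have "s1 ! j \<in> set s2" using assms(3) by (metis nth_mem)
  then obtain k where k: "k < length s2" "s2 ! k = s1 ! j" by (metis in_set_conv_nth)
  moreover have "cdis g1 g2 s1 s2 (s1 ! j) = cterm g1 s1 j + cterm g2 s2 k"
    unfolding cdis_def using sum_nth_eq_distinct[OF distinct(1) assms(3), of "cterm g1 s1"]
      sum_nth_eq_distinct[OF distinct(2) k(1), of "cterm g2 s2"] k(2) by simp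
  ultimately show ?thesis using that by blast
qed

lemma card_cdis_pos_le:
  assumes s1: "sorted_enum g1 S s1" and s2: "sorted_enum g2 S s2"
    and values_in: "g1 ` S \<subseteq> V" "g2 ` S \<subseteq> W" "finite V" "finite W"
  shows "card {a \<in> S. cdis g1 g2 s1 s2 a > 0} \<le> 2 * card V + 2 * card W"
proof -
  let ?B1 = "(!) s1 ` run_boundaries g1 s1" and ?B2 = "(!) s2 ` run_boundaries g2 s2"
  have "{a \<in> S. cdis g1 g2 s1 s2 a > 0} \<subseteq> ?B1 \<union> ?B2"
  proof
    fix a assume a: "a \<in> {a \<in> S. cdis g1 g2 s1 s2 a > 0}"
    then obtain j where j: "j < length s1" "s1 ! j = a"
      using s1 by (auto simp: sorted_enum_def in_set_conv_nth)
    then obtain k where k: "k < length s2" "s2 ! k = a"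
      and cd: "cdis g1 g2 s1 s2 a = cterm g1 s1 j + cterm g2 s2 k"
      using cdis_nth[OF s1 s2] by metis
    have "cterm g1 s1 j > 0 \<or> cterm g2 s2 k > 0"
      using a cd cterm_nonneg[OF s1 j(1)] cterm_nonneg[OF s2 k(1)]
      by (metis add.right_neutral mem_Collect_eq order_less_le)
    then show "a \<in> ?B1 \<union> ?B2"
      using cterm_pos_imp_run_boundary[OF s1 j(1)] cterm_pos_imp_run_boundary[OF s2 k(1)] j k
      by (metis UnI1 UnI2 image_eqI)
  qed
  then have "card {a \<in> S. cdis g1 g2 s1 s2 a > 0} \<le> card (?B1 \<union> ?B2)"
    by (intro card_mono) (auto simp: run_boundaries_def)
  also have "\<dots> \<le> card ?B1 + card ?B2"
    by (rule card_Un_le)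
  also have "\<dots> \<le> card (run_boundaries g1 s1) + card (run_boundaries g2 s2)"
    by (intro add_mono card_image_le) (simp_all add: run_boundaries_def)
  also have "\<dots> \<le> 2 * card V + 2 * card W"
    using card_run_boundaries_le[OF s1 values_in(1,3)] card_run_boundaries_le[OF s2 values_in(2,4)] by linarith
  finally show ?thesis .
qed

lemma cdis_pos_at_first_of_value:
  assumes s1: "sorted_enum g1 S s1" and s2: "sorted_enum g2 S s2" and i: "i \<in> S"
  obtains a where "a \<in> S" "g1 a = g1 i" "cdis g1 g2 s1 s2 a > 0"
proof -
  define j where "j = (LEAST j. j < length s1 \<and> g1 (s1 ! j) = g1 i)"
  have "\<exists>j. j < length s1 \<and> g1 (s1 ! j) = g1 i"
    using s1 i by (auto simp: sorted_enum_def in_set_conv_nth)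
  then have j: "j < length s1" "g1 (s1 ! j) = g1 i"
    unfolding j_def by (metis (mono_tags, lifting) LeastI_ex)+
  have "j = 0 \<or> g1 (s1 ! (j - 1)) < g1 (s1 ! j)"
  proof (cases "j = 0")
    case False
    then have "g1 (s1 ! (j - 1)) \<noteq> g1 i"
      using j(1) not_less_Least[of "j - 1" "\<lambda>j. j < length s1 \<and> g1 (s1 ! j) = g1 i"]
      unfolding j_def by fastforce
    then show ?thesis using sorted_enum_mono[OF s1, of "j - 1" j] j by fastforce
  qed simp
  then have "cterm g1 s1 j > 0" using cterm_pos_at_run_start[OF s1 j(1)] by blast
  moreover obtain k where "k < length s2"
    "cdis g1 g2 s1 s2 (s1 ! j) = cterm g1 s1 j + cterm g2 s2 k"
    using cdis_nth[OF s1 s2 j(1)] by blast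
  ultimately have "cdis g1 g2 s1 s2 (s1 ! j) > 0"
    using cterm_nonneg[OF s2] by (simp add: add_pos_nonneg)
  moreover have "s1 ! j \<in> S" using s1 j(1) by (auto simp: sorted_enum_def)
  ultimately show ?thesis using that j(2) by blast
qed

lemma positive_mem_top_selection:
  fixes c :: "'a \<Rightarrow> 'b :: {linorder, zero}"
  assumes "finite F" "T \<subseteq> F" "card T = N" "\<forall>a\<in>T. \<forall>b\<in>F - T. c b \<le> c a"
    and "card {a \<in> F. c a > 0} \<le> N" "b \<in> F" "c b > 0"
  shows "b \<in> T"
proof (rule ccontr)
  assume b: "b \<notin> T"
  have "c a > 0" if "a \<in> T" for a
    using assms(4,6,7) b that by (blast intro: order.strict_trans2)
  with assms(2,6,7) have "insert b T \<subseteq> {a \<in> F. c a > 0}" by blast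
  then have "card (insert b T) \<le> N"
    using assms(1,5) card_mono[of "{a \<in> F. c a > 0}" "insert b T"] by simp
  moreover have "card (insert b T) = N + 1"
    using b assms(1-3) by (simp add: finite_subset)
  ultimately show False by simp
qed

lemma remaining_subset: "remaining f R k \<subseteq> {..<length R}"
  by (induction k) auto

lemma front_subset: "front f R k \<subseteq> {..<length R}"
  unfolding front_def nondom_def using remaining_subset by blast

lemma front_one_iff:
  "i \<in> front f R 1 \<longleftrightarrow> i < length R \<and> (\<forall>j<length R. \<not> sdom f (R ! j) (R ! i))"
  by (auto simp: front_def nondom_def)

lemma front_one_eq_if_fst_eq:
  assumes "i \<in> front f R 1" "a \<in> front f R 1" "fst (f (R ! a)) = fst (f (R ! i))"
  shows "f (R ! a) = f (R ! i)"
proof -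
  have "\<not> sdom f (R ! a) (R ! i)" "\<not> sdom f (R ! i) (R ! a)"
    using assms(1,2) unfolding front_one_iff by blast+
  with assms(3) show ?thesis unfolding sdom_def by (auto simp: prod_eq_iff)
qed

lemma set_eq_selected_individuals:
  assumes "T \<subseteq> front f R k"
    and "mset P' = image_mset ((!) R) (mset_set ((\<Union>i\<in>I. front f R i) \<union> T))"
  shows "set P' = (!) R ` ((\<Union>i\<in>I. front f R i) \<union> T)"
proof -
  have "(\<Union>i\<in>I. front f R i) \<union> T \<subseteq> {..<length R}"
    using assms(1) front_subset by blast
  then have "finite ((\<Union>i\<in>I. front f R i) \<union> T)"
    by (rule finite_subset) simp
  then show ?thesis by (metis assms(2) finite_set_mset_mset_set set_image_mset set_mset_mset)
qed

lemma set_subset_if_nsga_select: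
  assumes "nsga_select f N R P'"
  shows "set P' \<subseteq> set R"
proof -
  obtain istar T where T: "T \<subseteq> front f R istar"
    and P': "mset P' = image_mset ((!) R) (mset_set ((\<Union>i\<in>{1..<istar}. front f R i) \<union> T))"
    using assms unfolding nsga_select_def by blast
  show ?thesis
    using set_eq_selected_individuals[OF T P'] T front_subset by fastforce
qed

lemma nsga_select_keeps_first_front_values:
  assumes sel: "nsga_select f N R P'"
    and values_in: "\<forall>x\<in>set R. fst (f x) \<in> V \<and> snd (f x) \<in> W" "finite V" "finite W"
    and N: "2 * card V + 2 * card W \<le> N"
    and i: "i \<in> front f R 1"
  shows "\<exists>y\<in>set P'. f y = f (R ! i)"
proof -
  let ?g1 = "\<lambda>i. fst (f (R ! i))" and ?g2 = "\<lambda>i. snd (f (R ! i))"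
  obtain istar T s1 s2 where istar: "istar \<ge> 1"
    and s1: "sorted_enum ?g1 (front f R istar) s1" and s2: "sorted_enum ?g2 (front f R istar) s2"
    and T: "T \<subseteq> front f R istar" "card T = N - (\<Sum>i\<in>{1..<istar}. card (front f R i))"
      "\<forall>a\<in>T. \<forall>b\<in>front f R istar - T. cdis ?g1 ?g2 s1 s2 b \<le> cdis ?g1 ?g2 s1 s2 a"
    and P': "mset P' = image_mset ((!) R) (mset_set ((\<Union>i\<in>{1..<istar}. front f R i) \<union> T))"
    using sel unfolding nsga_select_def by blast
  have set_P': "set P' = (!) R ` ((\<Union>i\<in>{1..<istar}. front f R i) \<union> T)"
    by (rule set_eq_selected_individuals[OF T(1) P'])
  show ?thesis
  proof (cases "istar = 1")
    case False
    with i istar set_P' show ?thesis by fastforce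
  next
    case True
    let ?F = "front f R 1" and ?c = "cdis ?g1 ?g2 s1 s2"
    have F: "finite ?F" and F_values: "?g1 ` ?F \<subseteq> V" "?g2 ` ?F \<subseteq> W"
      using front_subset[of f R 1] values_in(1) by (auto intro: finite_subset)
    obtain a where a: "a \<in> ?F" "?g1 a = ?g1 i" "?c a > 0"
      using cdis_pos_at_first_of_value s1 s2 i True by blast
    have "card {a \<in> ?F. ?c a > 0} \<le> N"
      using card_cdis_pos_le[OF _ _ F_values values_in(2,3)] s1 s2 N True by fastforce
    then have "a \<in> T"
      using positive_mem_top_selection[of ?F T N ?c a] F T a True by simp
    then have "R ! a \<in> set P'" using set_P' by blast
    moreover have "f (R ! a) = f (R ! i)" using front_one_eq_if_fst_eq[OF i a(1,2)] .
    ultimately show ?thesis by blast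
  qed
qed

lemma prod_of_bool_eq: "finite A \<Longrightarrow> (\<Prod>j\<in>A. of_bool (P j)) = (of_bool (\<forall>j\<in>A. P j) :: nat)"
  by (induction A rule: finite_induct) auto

lemma LO_eq_card: "LO x = card {i \<in> {1..length x}. \<forall>j\<in>{1..i}. x ! (j - 1)}"
  unfolding LO_def by (simp add: prod_of_bool_eq Int_def conj_commute)

lemma TZ_eq_card: "TZ x = card {i \<in> {1..length x}. \<forall>j\<in>{i..length x}. \<not> x ! (j - 1)}"
  unfolding TZ_def by (simp add: prod_of_bool_eq Int_def conj_commute)

lemma LO_plus_TZ_le_length: "LO x + TZ x \<le> length x"
proof -
  let ?A = "{i \<in> {1..length x}. \<forall>j\<in>{1..i}. x ! (j - 1)}"
  let ?B = "{i \<in> {1..length x}. \<forall>j\<in>{i..length x}. \<not> x ! (j - 1)}"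
  have "?A \<inter> ?B = {}" by fastforce
  then have "card ?A + card ?B = card (?A \<union> ?B)" by (simp add: card_Un_disjoint)
  also have "\<dots> \<le> card {1..length x}" by (rule card_mono) auto
  finally show ?thesis unfolding LO_eq_card TZ_eq_card by simp
qed

lemma lotz_mem_values:
  "length x = n \<Longrightarrow> fst (lotz x) \<in> real ` {0..n} \<and> snd (lotz x) \<in> real ` {0..n}"
  using LO_plus_TZ_le_length[of x] by (auto simp: lotz_def)

lemma pareto_optimal_mem_front_one:
  assumes "\<forall>x\<in>set R. length x = n" "i < length R" "lotz (R ! i) = (real k, real (n - k))" "k \<le> n"
  shows "i \<in> front lotz R 1"
  unfolding front_one_iff
proof (intro conjI allI impI)
  fix j assume "j < length R"
  then have "real (LO (R ! j)) + real (TZ (R ! j)) \<le> real n"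
    using assms(1) LO_plus_TZ_le_length[of "R ! j"] by (metis nth_mem of_nat_add of_nat_mono)
  with assms(3,4) show "\<not> sdom lotz (R ! j) (R ! i)"
    unfolding sdom_def lotz_def by auto
qed (rule assms(2))

theorem lemma7:
  fixes n N :: nat and P Q :: "nat \<Rightarrow> bool list list"
  assumes N: "N \<ge> 4 * (n + 1)"
    and P0: "length (P 0) = N" "\<forall>x\<in>set (P 0). length x = n"
    and Qt: "\<And>t. length (Q t) = N \<and> (\<forall>x\<in>set (Q t). length x = n)"
    and step: "\<And>t. nsga_select lotz N (P t @ Q t) (P (Suc t))"
  shows "(\<forall>t i. i \<in> front lotz (P t @ Q t) 1 \<longrightarrow>
              (\<exists>y\<in>set (P (Suc t)). lotz y = lotz ((P t @ Q t) ! i)))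
       \<and> (\<forall>t k. k \<le> n \<and> (\<exists>x\<in>set (P t). lotz x = (real k, real (n - k))) \<longrightarrow>
              (\<forall>s\<ge>t. \<exists>y\<in>set (P s). lotz y = (real k, real (n - k))))"
proof -
  have "\<forall>x\<in>set (P t). length x = n" for t
    using P0(2) Qt set_subset_if_nsga_select[OF step] by (induction t) fastforce+
  then have lengths: "\<forall>x\<in>set (P t @ Q t). length x = n" for t
    using Qt by auto
  have card_values: "card (real ` {0..n}) = n + 1"
    by (simp add: card_image)
  have survives: "\<exists>y\<in>set (P (Suc t)). lotz y = lotz ((P t @ Q t) ! i)"
    if "i \<in> front lotz (P t @ Q t) 1" for t i
    using nsga_select_keeps_first_front_values[OF step,
        where V = "real ` {0..n}" and W = "real ` {0..n}"]
      lotz_mem_values lengths N card_values that by simp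
  have persists: "\<exists>y\<in>set (P (Suc t)). lotz y = (real k, real (n - k))"
    if k: "k \<le> n" and x: "x \<in> set (P t)" "lotz x = (real k, real (n - k))" for t k x
  proof -
    have "x \<in> set (P t @ Q t)" using x(1) by simp
    then obtain i where i: "i < length (P t @ Q t)" "(P t @ Q t) ! i = x"
      by (metis in_set_conv_nth)
    then have "i \<in> front lotz (P t @ Q t) 1"
      using pareto_optimal_mem_front_one[OF lengths] k x(2) by simp
    with survives i(2) x(2) show ?thesis by metis
  qed
  have "\<exists>y\<in>set (P s). lotz y = (real k, real (n - k))"
    if k: "k \<le> n" and x: "\<exists>x\<in>set (P t). lotz x = (real k, real (n - k))" and "t \<le> s"
    for t k s
    using \<open>t \<le> s\<close> by (induction s rule: dec_induct) (use k x persists in blast)+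
  with survives show ?thesis by blast
qed

end
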